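(* Let $R$ be a $*$-ring. The following are equivalent: (1) ${\rm psr}(R)=1$. (2) For any $a,b\in R$ with $aR+bR=R$ there exists a projection $p$ such that $a+bp$ is right invertible. (3) For any $a,b\in R$ with $aR+bR=R$ there exists a projection $p$ such that $a+bp$ is left invertible.
   Context: A $*$-ring is a ring with identity with an involution $*$. A projection is $p$ with $p^2=p=p^*$. ${\rm psr}(R)=1$ means: for any $a,b\in R$ with $aR+bR=R$ there is a projection $p$ such that $a+bp$ is a unit. *)

theory Defs
  imports Main
begin

definition is_involution :: "('a::ring_1 \<Rightarrow> 'a) \<Rightarrow> bool" where
  "is_involution s \<longleftrightarrow>
     (\<forall>x y. s (x + y) = s x + s y) \<and>
     (\<forall>x y. s (x * y) = s y * s x) \<and>
     (\<forall>x. s (s x) = x)"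

definition is_projection :: "('a::ring_1 \<Rightarrow> 'a) \<Rightarrow> 'a \<Rightarrow> bool" where
  "is_projection s p \<longleftrightarrow> p * p = p \<and> s p = p"

definition is_unit :: "'a::ring_1 \<Rightarrow> bool" where
  "is_unit u \<longleftrightarrow> (\<exists>v. u * v = 1 \<and> v * u = 1)"

definition right_invertible :: "'a::ring_1 \<Rightarrow> bool" where
  "right_invertible u \<longleftrightarrow> (\<exists>v. u * v = 1)"

definition left_invertible :: "'a::ring_1 \<Rightarrow> bool" where
  "left_invertible u \<longleftrightarrow> (\<exists>v. v * u = 1)"

definition right_comaximal :: "'a::ring_1 \<Rightarrow> 'a \<Rightarrow> bool" where
  "right_comaximal a b \<longleftrightarrow> {a * x + b * y | x y. True} = UNIV"

definition psr_one :: "('a::ring_1 \<Rightarrow> 'a) \<Rightarrow> bool" where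
  "psr_one s \<longleftrightarrow> (\<forall>a b. right_comaximal a b \<longrightarrow>
      (\<exists>p. is_projection s p \<and> is_unit (a + b * p)))"

end

theory Submission
  imports Defs
begin

text \<open>Each of the one-sided conditions already forces every one-sided invertible element of the
  ring to be a unit; so any projection produced by (2) or (3) in fact makes \<open>a + b p\<close> a unit.
  If \<open>u v = 1\<close>, then \<open>v R + (1 - v u) R = R\<close>, and (2) yields \<open>q\<close> such that \<open>v' = v + (1 - v u) q\<close>
  is right invertible; as \<open>u v' = 1\<close> too, \<open>u\<close> has a right invertible right inverse, hence is a unit.
  If \<open>v u = 1\<close>, then \<open>v R + 0 R = R\<close> and (3) makes \<open>v\<close> itself left invertible.\<close>

lemma right_comaximalI:
  fixes a b :: "'a::ring_1"
  assumes "a * x + b * y = 1"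
  shows "right_comaximal a b"
  unfolding right_comaximal_def
proof (intro set_eqI iffI)
  fix z :: 'a
  have "a * (x * z) + b * (y * z) = z"
    using assms by (metis distrib_right mult.assoc mult_1_left)
  then show "z \<in> {a * x + b * y | x y. True}" by (intro CollectI exI[of _ "x * z"] exI[of _ "y * z"]) simp
qed auto

lemma is_unit_imp_right_invertible: "is_unit u \<Longrightarrow> right_invertible u"
  unfolding is_unit_def right_invertible_def by blast

lemma is_unit_imp_left_invertible: "is_unit u \<Longrightarrow> left_invertible u"
  unfolding is_unit_def left_invertible_def by blast

lemma is_unit_if_right_inverse_right_invertible:
  fixes u v :: "'a::ring_1"
  assumes uv: "u * v = 1" and "right_invertible v"
  shows "is_unit u"
proof -
  obtain w where vw: "v * w = 1" using \<open>right_invertible v\<close> unfolding right_invertible_def by blast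
  have "u = (u * v) * w" using vw by (simp add: mult.assoc)
  then have "u = w" using uv by simp
  with uv vw show ?thesis unfolding is_unit_def by blast
qed

lemma is_unit_if_left_inverse_left_invertible:
  fixes u v :: "'a::ring_1"
  assumes vu: "v * u = 1" and "left_invertible v"
  shows "is_unit u"
proof -
  obtain w where wv: "w * v = 1" using \<open>left_invertible v\<close> unfolding left_invertible_def by blast
  have "u = w * (v * u)" using wv by (simp flip: mult.assoc)
  then have "u = w" using vu by simp
  with vu wv show ?thesis unfolding is_unit_def by blast
qed

lemma is_unit_if_right_invertible:
  fixes s :: "'a::ring_1 \<Rightarrow> 'a" and u :: 'a
  assumes stable: "\<forall>a b. right_comaximal a b \<longrightarrow>
                     (\<exists>p. is_projection s p \<and> right_invertible (a + b * p))"
    and "right_invertible u"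
  shows "is_unit u"
proof -
  obtain v where uv: "u * v = 1" using \<open>right_invertible u\<close> unfolding right_invertible_def by blast
  have "v * u + (1 - v * u) * 1 = 1" by simp
  then have "right_comaximal v (1 - v * u)" by (rule right_comaximalI)
  with stable obtain q where inv: "right_invertible (v + (1 - v * u) * q)" by blast
  have "u * (v + (1 - v * u) * q) = 1"
    using uv by (simp add: algebra_simps flip: mult.assoc)
  from this inv show ?thesis by (rule is_unit_if_right_inverse_right_invertible)
qed

lemma is_unit_if_left_invertible:
  fixes s :: "'a::ring_1 \<Rightarrow> 'a" and u :: 'a
  assumes stable: "\<forall>a b. right_comaximal a b \<longrightarrow>
                     (\<exists>p. is_projection s p \<and> left_invertible (a + b * p))"
    and "left_invertible u"
  shows "is_unit u"
proof -
  obtain v where vu: "v * u = 1" using \<open>left_invertible u\<close> unfolding left_invertible_def by blast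
  have "v * u + 0 * 0 = 1" using vu by simp
  then have "right_comaximal v 0" by (rule right_comaximalI)
  with stable obtain p where "left_invertible (v + 0 * p)" by blast
  then have "left_invertible v" by simp
  with vu show ?thesis by (rule is_unit_if_left_inverse_left_invertible)
qed

theorem proposition4p2:
  fixes s :: "'a::ring_1 \<Rightarrow> 'a"
  assumes "is_involution s"
  shows "(psr_one s \<longleftrightarrow>
           (\<forall>a b. right_comaximal a b \<longrightarrow>
              (\<exists>p. is_projection s p \<and> right_invertible (a + b * p))))
       \<and> (psr_one s \<longleftrightarrow>
           (\<forall>a b. right_comaximal a b \<longrightarrow>
              (\<exists>p. is_projection s p \<and> left_invertible (a + b * p))))"
  unfolding psr_one_def
  using is_unit_imp_right_invertible is_unit_imp_left_invertible
    is_unit_if_right_invertible[of s] is_unit_if_left_invertible[of s]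
  by meson

end
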